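(* Let $(\xi_i,\mathcal{F}_i)_{i=0,\dots,n}$ be a sequence of real-valued martingale differences (with $\mathbf{E}[\xi_i\mid\mathcal{F}_{i-1}]=0$). Let $p\ge2$ and assume $\mathbf{E}[|\xi_i|^p]<\infty$ for all $i\in[1,n]$. For $y>0$ set $\eta_i=\xi_i\mathbf{1}_{\{\xi_i\le y\}}$. Then for all $\lambda>0$ and $i\in[1,n]$, $$\mathbf{E}[e^{\lambda\eta_i}\mid\mathcal{F}_{i-1}]\le1+\frac12e^p\lambda^2\,\mathbf{E}[\xi_i^2\mid\mathcal{F}_{i-1}]+f(y)\,\mathbf{E}[(\xi_i^+)^p\mid\mathcal{F}_{i-1}],$$ where $f(u)=\dfrac{e^{\lambda u}-1-\lambda u}{u^p}$ for $u>0$.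
   Context: $x^+=\max\{x,0\}$. *)

theory Defs
  imports "HOL-Probability.Probability"
begin

definition mgf_f :: "real \<Rightarrow> real \<Rightarrow> real \<Rightarrow> real" where
  "mgf_f lam p u = (exp (lam * u) - 1 - lam * u) / u powr p"

end

theory Submission
  imports Defs
begin

text \<open>
  Pointwise, with \<open>z = \<xi>\<^sub>i\<close>, one has
  \<open>exp (\<lambda> z 1{z \<le> y}) \<le> 1 + \<lambda> z + e\<^sup>p \<lambda>\<^sup>2 z\<^sup>2 / 2 + f(y) (z\<^sup>+)\<^sup>p\<close>:
  for \<open>\<lambda> z \<le> p\<close> this is the second order Taylor bound of \<open>exp\<close>, while for
  \<open>p < \<lambda> z \<le> \<lambda> y\<close> it follows from \<open>f(z) \<le> f(y)\<close>, since \<open>f\<close> increases on \<open>[p/\<lambda>, \<infinity>)\<close>.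
  Taking conditional expectations, the linear term vanishes because \<open>\<xi>\<^sub>i\<close> is a
  martingale difference.
\<close>

lemma exp_le_quadratic_Taylor:
  fixes x c :: real
  assumes "x \<le> c" "0 \<le> c"
  shows "exp x \<le> 1 + x + exp c * x\<^sup>2 / 2"
proof (cases "x < 0")
  case True
  from Maclaurin_minus[OF True, where n = 2 and f = exp and diff = "\<lambda>_. exp"]
  obtain t where t: "t < 0" "exp x = (\<Sum>m<2. x ^ m / fact m) + exp t / 2 * x\<^sup>2"
    by (auto intro: DERIV_exp)
  have "exp t * x\<^sup>2 \<le> exp c * x\<^sup>2"
    using t(1) assms(2) by (intro mult_right_mono) auto
  then show ?thesis
    using t(2) by (simp add: numeral_2_eq_2)
next
  case False
  from Maclaurin_exp_le[of x 2]
  obtain t where t: "\<bar>t\<bar> \<le> \<bar>x\<bar>" "exp x = (\<Sum>m<2. x ^ m / fact m) + exp t / 2 * x\<^sup>2"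
    by auto
  have "exp t * x\<^sup>2 \<le> exp c * x\<^sup>2"
    using t(1) False assms(1) by (intro mult_right_mono) auto
  then show ?thesis
    using t(2) by (simp add: numeral_2_eq_2)
qed

lemma exp_remainder_div_powr_mono:
  fixes p a b :: real
  assumes "0 < p" "p \<le> a" "a \<le> b"
  shows "(exp a - 1 - a) / a powr p \<le> (exp b - 1 - b) / b powr p"
proof (rule DERIV_nonneg_imp_nondecreasing[OF assms(3)])
  fix x
  assume "a \<le> x" "x \<le> b"
  with assms have x: "0 < x" "p \<le> x" by auto
  have deriv: "((\<lambda>x. (exp x - 1 - x) / x powr p) has_real_derivative
      ((exp x - 1) * x powr p - (exp x - 1 - x) * (p * x powr (p - 1))) / (x powr p * x powr p)) (at x)"
    using x by (auto intro!: derivative_eq_intros)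
  have "p * (exp x - 1 - x) \<le> x * (exp x - 1)"
  proof -
    have "0 \<le> (x - p) * (exp x - 1) + p * x"
      using x assms(1) by (intro add_nonneg_nonneg mult_nonneg_nonneg) auto
    then show ?thesis
      by (simp add: algebra_simps)
  qed
  then have "(p * (exp x - 1 - x)) * x powr (p - 1) \<le> (x * (exp x - 1)) * x powr (p - 1)"
    by (rule mult_right_mono) simp
  also have "\<dots> = (exp x - 1) * x powr p"
    using x by (simp add: powr_mult_base algebra_simps)
  finally have "0 \<le> ((exp x - 1) * x powr p - (exp x - 1 - x) * (p * x powr (p - 1)))
                    / (x powr p * x powr p)"
    by (intro divide_nonneg_nonneg) (auto simp: algebra_simps)
  with deriv show "\<exists>d. ((\<lambda>x. (exp x - 1 - x) / x powr p) has_real_derivative d) (at x) \<and> 0 \<le> d"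
    by blast
qed

lemma mgf_f_nonneg: "0 \<le> mgf_f lam p u"
proof -
  have "0 \<le> exp (lam * u) - 1 - lam * u"
    using exp_ge_add_one_self[of "lam * u"] by linarith
  then show ?thesis
    by (simp add: mgf_f_def)
qed

lemma mgf_f_mono:
  fixes lam p u v :: real
  assumes "0 < lam" "0 < p" "p \<le> lam * u" "u \<le> v"
  shows "mgf_f lam p u \<le> mgf_f lam p v"
proof -
  have "lam * u \<le> lam * v"
    using assms by (intro mult_left_mono) auto
  then have "0 < lam * u" "0 < lam * v"
    using assms by linarith+
  then have "0 < u" "0 < v"
    using assms(1) by (simp_all add: zero_less_mult_iff)
  have scale: "mgf_f lam p w = lam powr p * ((exp (lam * w) - 1 - lam * w) / (lam * w) powr p)"
    if "0 < w" for w
    using that assms(1) by (simp add: mgf_f_def powr_mult)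
  have "(exp (lam * u) - 1 - lam * u) / (lam * u) powr p
      \<le> (exp (lam * v) - 1 - lam * v) / (lam * v) powr p"
    using assms by (intro exp_remainder_div_powr_mono mult_left_mono) auto
  then show ?thesis
    unfolding scale[OF \<open>0 < u\<close>] scale[OF \<open>0 < v\<close>] by (rule mult_left_mono) simp
qed

lemma exp_truncated_le:
  fixes lam p y z :: real
  assumes lam: "0 < lam" and y: "0 < y" and p: "2 \<le> p"
  shows "exp (lam * (z * (if z \<le> y then 1 else 0)))
     \<le> 1 + lam * z + 1/2 * exp p * lam\<^sup>2 * z\<^sup>2 + mgf_f lam p y * (max z 0) powr p"
proof -
  have rest: "0 \<le> mgf_f lam p y * (max z 0) powr p"
    by (simp add: mgf_f_nonneg)
  consider "y < z" | "z \<le> y" "lam * z \<le> p" | "z \<le> y" "p < lam * z"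
    by linarith
  then show ?thesis
  proof cases
    case 1
    then show ?thesis
      using lam y rest by (simp add: add_nonneg_nonneg)
  next
    case 2
    then have "exp (lam * z) \<le> 1 + lam * z + exp p * (lam * z)\<^sup>2 / 2"
      using p by (intro exp_le_quadratic_Taylor) auto
    then show ?thesis
      using 2 rest by (simp add: power_mult_distrib)
  next
    case 3
    then have "0 < lam * z"
      using p by linarith
    then have "0 < z"
      using lam by (simp add: zero_less_mult_iff)
    have "exp (lam * z) - 1 - lam * z = mgf_f lam p z * z powr p"
      using \<open>0 < z\<close> by (simp add: mgf_f_def)
    also have "\<dots> \<le> mgf_f lam p y * z powr p"
      using 3 lam p by (intro mult_right_mono mgf_f_mono) auto
    finally have "exp (lam * z) - 1 - lam * z \<le> mgf_f lam p y * z powr p" .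
    moreover have "0 \<le> 1/2 * exp p * lam\<^sup>2 * z\<^sup>2"
      by simp
    ultimately have "exp (lam * z) \<le> 1 + lam * z + 1/2 * exp p * lam\<^sup>2 * z\<^sup>2 + mgf_f lam p y * z powr p"
      by linarith
    then show ?thesis
      using 3 \<open>0 < z\<close> by simp
  qed
qed

lemma square_le_one_plus_abs_powr:
  fixes x p :: real
  assumes "2 \<le> p"
  shows "x\<^sup>2 \<le> 1 + \<bar>x\<bar> powr p"
proof (cases "\<bar>x\<bar> \<le> 1")
  case True
  then show ?thesis
    by (simp add: abs_square_le_1 add_increasing2)
next
  case False
  then have "\<bar>x\<bar> powr 2 \<le> \<bar>x\<bar> powr p"
    using assms by (intro powr_mono) auto
  then show ?thesis
    using False by (simp add: powr_numeral)
qed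

lemma (in finite_measure) integrable_square_if_integrable_abs_powr:
  fixes X :: "'a \<Rightarrow> real"
  assumes "2 \<le> p" "integrable M (\<lambda>x. \<bar>X x\<bar> powr p)" "X \<in> borel_measurable M"
  shows "integrable M (\<lambda>x. (X x)\<^sup>2)"
proof (rule Bochner_Integration.integrable_bound)
  show "integrable M (\<lambda>x. 1 + \<bar>X x\<bar> powr p)"
    using assms(2) by simp
  show "AE x in M. norm ((X x)\<^sup>2) \<le> norm (1 + \<bar>X x\<bar> powr p)"
    using square_le_one_plus_abs_powr[OF assms(1)] by (simp add: add_nonneg_nonneg)
qed (use assms(3) in simp)

lemma integrable_pos_part_powr:
  fixes X :: "'a \<Rightarrow> real"
  assumes "0 \<le> p" "integrable M (\<lambda>x. \<bar>X x\<bar> powr p)" "X \<in> borel_measurable M"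
  shows "integrable M (\<lambda>x. (max (X x) 0) powr p)"
proof (rule Bochner_Integration.integrable_bound[OF assms(2)])
  show "AE x in M. norm (max (X x) 0 powr p) \<le> norm (\<bar>X x\<bar> powr p)"
    using assms(1) by (simp add: powr_mono2)
qed (use assms(3) in simp)

lemma (in sigma_finite_subalgebra) real_cond_exp_le_of_centred_bound:
  fixes a b c :: real
  assumes "finite_measure M"
    and h: "integrable M h" and X: "integrable M X" and Y: "integrable M Y" and Z: "integrable M Z"
    and centred: "AE x in M. real_cond_exp M F X x = 0"
    and bound: "AE x in M. h x \<le> 1 + a * X x + b * Y x + c * Z x"
  shows "AE x in M. real_cond_exp M F h x
           \<le> 1 + b * real_cond_exp M F Y x + c * real_cond_exp M F Z x"
proof -
  have one: "integrable M (\<lambda>_. 1 :: real)"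
    using \<open>finite_measure M\<close> by (simp add: finite_measure.integrable_const)
  have aX: "integrable M (\<lambda>x. a * X x)" and bY: "integrable M (\<lambda>x. b * Y x)"
    and cZ: "integrable M (\<lambda>x. c * Z x)"
    using X Y Z by simp_all
  have sum1: "integrable M (\<lambda>x. 1 + a * X x)"
    using one aX by (rule Bochner_Integration.integrable_add)
  have sum2: "integrable M (\<lambda>x. 1 + a * X x + b * Y x)"
    using sum1 bY by (rule Bochner_Integration.integrable_add)
  have sum3: "integrable M (\<lambda>x. 1 + a * X x + b * Y x + c * Z x)"
    using sum2 cZ by (rule Bochner_Integration.integrable_add)
  have "AE x in M. real_cond_exp M F h x
          \<le> real_cond_exp M F (\<lambda>x. 1 + a * X x + b * Y x + c * Z x) x"
    using bound h sum3 by (rule real_cond_exp_mono)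
  moreover have "AE x in M. real_cond_exp M F (\<lambda>x. 1 + a * X x + b * Y x + c * Z x) x
      = real_cond_exp M F (\<lambda>x. 1 + a * X x + b * Y x) x + real_cond_exp M F (\<lambda>x. c * Z x) x"
    using sum2 cZ by (rule real_cond_exp_add)
  moreover have "AE x in M. real_cond_exp M F (\<lambda>x. 1 + a * X x + b * Y x) x
      = real_cond_exp M F (\<lambda>x. 1 + a * X x) x + real_cond_exp M F (\<lambda>x. b * Y x) x"
    using sum1 bY by (rule real_cond_exp_add)
  moreover have "AE x in M. real_cond_exp M F (\<lambda>x. 1 + a * X x) x
      = real_cond_exp M F (\<lambda>_. 1) x + real_cond_exp M F (\<lambda>x. a * X x) x"
    using one aX by (rule real_cond_exp_add)
  moreover have "AE x in M. real_cond_exp M F (\<lambda>_. 1) x = 1"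
    using one by (rule real_cond_exp_F_meas) simp
  moreover have "AE x in M. real_cond_exp M F (\<lambda>x. a * X x) x = a * real_cond_exp M F X x"
    and "AE x in M. real_cond_exp M F (\<lambda>x. b * Y x) x = b * real_cond_exp M F Y x"
    and "AE x in M. real_cond_exp M F (\<lambda>x. c * Z x) x = c * real_cond_exp M F Z x"
    using X Y Z by (simp_all add: real_cond_exp_cmult)
  ultimately show ?thesis
    using centred by eventually_elim simp
qed

theorem lemma5p1:
  fixes M :: "'a measure" and F :: "nat \<Rightarrow> 'a measure"
    and \<xi> :: "nat \<Rightarrow> 'a \<Rightarrow> real" and n :: nat and p y lam :: real
  assumes "prob_space M"
    and subalg: "\<And>i. i \<le> n \<Longrightarrow> sigma_finite_subalgebra M (F i)"
    and filt: "\<And>i j. i \<le> j \<Longrightarrow> j \<le> n \<Longrightarrow> sets (F i) \<subseteq> sets (F j)"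
    and adapted: "\<And>i. i \<le> n \<Longrightarrow> \<xi> i \<in> borel_measurable (F i)"
    and integ: "\<And>i. i \<le> n \<Longrightarrow> integrable M (\<xi> i)"
    and mdiff: "\<And>i. i \<in> {1..n} \<Longrightarrow> AE x in M. real_cond_exp M (F (i - 1)) (\<xi> i) x = 0"
    and p: "p \<ge> 2"
    and moment: "\<And>i. i \<in> {1..n} \<Longrightarrow> integrable M (\<lambda>x. \<bar>\<xi> i x\<bar> powr p)"
    and y: "y > 0"
    and lam: "lam > 0"
    and i: "i \<in> {1..n}"
  shows "AE x in M.
           real_cond_exp M (F (i - 1))
             (\<lambda>\<omega>. exp (lam * (\<xi> i \<omega> * (if \<xi> i \<omega> \<le> y then 1 else 0)))) x
         \<le> 1 + 1/2 * exp p * lam\<^sup>2 * real_cond_exp M (F (i - 1)) (\<lambda>\<omega>. (\<xi> i \<omega>)\<^sup>2) x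
             + mgf_f lam p y * real_cond_exp M (F (i - 1)) (\<lambda>\<omega>. (max (\<xi> i \<omega>) 0) powr p) x"
proof -
  interpret prob_space M by fact
  interpret sigma_finite_subalgebra M "F (i - 1)"
    using i by (intro subalg) auto
  have \<xi>: "integrable M (\<xi> i)"
    using integ i by simp
  then have [measurable]: "\<xi> i \<in> borel_measurable M"
    by (rule borel_measurable_integrable)
  have truncated_exp: "integrable M (\<lambda>\<omega>. exp (lam * (\<xi> i \<omega> * (if \<xi> i \<omega> \<le> y then 1 else 0))))"
    using lam y by (intro integrable_const_bound[where B = "exp (lam * y)"]) auto
  have square: "integrable M (\<lambda>\<omega>. (\<xi> i \<omega>)\<^sup>2)"
    using p moment[OF i] by (rule integrable_square_if_integrable_abs_powr) simp
  have pos_part: "integrable M (\<lambda>\<omega>. (max (\<xi> i \<omega>) 0) powr p)"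
    using p moment[OF i] by (intro integrable_pos_part_powr) auto
  show ?thesis
    by (rule real_cond_exp_le_of_centred_bound[where a = lam,
          OF finite_measure_axioms truncated_exp \<xi> square pos_part mdiff[OF i]])
       (intro AE_I2 exp_truncated_le[OF lam y p])
qed

end
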